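(* Let $\mathcal{X},\mathcal{Y}$ be finite, $P_{\bar X}$ an $m$-type on $\mathcal{X}$, $P_{Y|X}$ a channel, $P_{\bar XY}=P_{\bar X}P_{Y|X}$ with output $P_Y$, and $R>I(P_{\bar X},P_{Y|X})>0$. For a channel $Q_{Y|X}$ write $Q_Y=\sum_xP_{\bar X}(x)Q_{Y|X}(\cdot|x)$ and define \[ \aleph(R,P_{\bar X},P_{Y|X})=\min_{Q_{Y|X}}\Big\{D(P_{\bar X}Q_{Y|X}\|P_{\bar XY})+\tfrac12\big[R-D(P_{\bar X}Q_{Y|X}\|P_{\bar X}Q_Y)\big]_+\Big\}, \] \[ \beth(R,P_{\bar X},P_{Y|X})=\min_{Q_{Y|X}}\Big\{D(P_{\bar X}Q_{Y|X}\|P_{\bar XY})+\big[R-G(Q_{Y|X}\|P_{Y|X}|P_{\bar X})\big]_+\Big\}, \] where, with $(\bar X,\widetilde Y)\sim P_{\bar X}Q_{Y|X}$, \[ G(Q_{Y|X}\|P_{Y|X}|P_{\bar X})=H(Q_Y)-\mathbb{E}\big[\imath_{P_{Y|X}}(\widetilde Y|\bar X)\big]+\min_{R_{Y|X}:\ \sum_xP_{\bar X}(x)R_{Y|X}(\cdot|x)=Q_Y}D(P_{\bar X}R_{Y|X}\|P_{\bar XY}). \] Then $\aleph(R,P_{\bar X},P_{Y|X})\ge\frac12\beth(R,P_{\bar X},P_{Y|X})$.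
   Context: All minima over $Q_{Y|X}$, $R_{Y|X}$ range over channels from $\mathcal{X}$ to $\mathcal{Y}$. $[f]_+=\max\{0,f\}$, $D$ is relative entropy, $H$ is entropy, $\imath_{P_{Y|X}}(y|x)=\log\frac1{P_{Y|X}(y|x)}$. An $m$-type is a distribution with probabilities in $\{0,1/m,\dots,1\}$. *)

theory Defs
  imports Complex_Main "HOL-Library.Extended_Real"
begin

definition is_dist :: "('a::finite \<Rightarrow> real) \<Rightarrow> bool" where
  "is_dist P \<longleftrightarrow> (\<forall>a. P a \<ge> 0) \<and> sum P UNIV = 1"

definition is_channel :: "('x::finite \<Rightarrow> 'y::finite \<Rightarrow> real) \<Rightarrow> bool" where
  "is_channel W \<longleftrightarrow> (\<forall>x. is_dist (W x))"

definition is_mtype :: "nat \<Rightarrow> ('a::finite \<Rightarrow> real) \<Rightarrow> bool" where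
  "is_mtype m P \<longleftrightarrow> m > 0 \<and> is_dist P \<and> (\<forall>a. \<exists>k::nat. P a = real k / real m)"

definition relent :: "('a::finite \<Rightarrow> real) \<Rightarrow> ('a \<Rightarrow> real) \<Rightarrow> ereal" where
  "relent P Q = (if \<forall>a. P a > 0 \<longrightarrow> Q a > 0
      then ereal (\<Sum>a | P a > 0. P a * ln (P a / Q a)) else \<infinity>)"

definition entropy :: "('a::finite \<Rightarrow> real) \<Rightarrow> real" where
  "entropy P = - (\<Sum>a | P a > 0. P a * ln (P a))"

definition joint :: "('x::finite \<Rightarrow> real) \<Rightarrow> ('x \<Rightarrow> 'y::finite \<Rightarrow> real) \<Rightarrow> ('x \<times> 'y \<Rightarrow> real)" where
  "joint PX W = (\<lambda>(x,y). PX x * W x y)"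

definition outdist :: "('x::finite \<Rightarrow> real) \<Rightarrow> ('x \<Rightarrow> 'y::finite \<Rightarrow> real) \<Rightarrow> ('y \<Rightarrow> real)" where
  "outdist PX W = (\<lambda>y. \<Sum>x\<in>UNIV. PX x * W x y)"

definition proddist :: "('x::finite \<Rightarrow> real) \<Rightarrow> ('y::finite \<Rightarrow> real) \<Rightarrow> ('x \<times> 'y \<Rightarrow> real)" where
  "proddist PX PY = (\<lambda>(x,y). PX x * PY y)"

definition mutinf :: "('x::finite \<Rightarrow> real) \<Rightarrow> ('x \<Rightarrow> 'y::finite \<Rightarrow> real) \<Rightarrow> ereal" where
  "mutinf PX W = relent (joint PX W) (proddist PX (outdist PX W))"

text \<open>E[ i_P(Y~|X)] with (X,Y~) ~ P_X Q; +\<infinity> if Q puts mass where P vanishes.\<close>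
definition cross_info :: "('x::finite \<Rightarrow> real) \<Rightarrow> ('x \<Rightarrow> 'y::finite \<Rightarrow> real) \<Rightarrow> ('x \<Rightarrow> 'y \<Rightarrow> real) \<Rightarrow> ereal" where
  "cross_info PX Q P = (if \<forall>x y. PX x * Q x y > 0 \<longrightarrow> P x y > 0
      then ereal (\<Sum>(x,y) | PX x * Q x y > 0. PX x * Q x y * ln (1 / P x y)) else \<infinity>)"

definition posp :: "ereal \<Rightarrow> ereal" where
  "posp f = max 0 f"

definition Gfun :: "('x::finite \<Rightarrow> 'y::finite \<Rightarrow> real) \<Rightarrow> ('x \<Rightarrow> 'y \<Rightarrow> real) \<Rightarrow> ('x \<Rightarrow> real) \<Rightarrow> ereal" where
  "Gfun Q P PX = ereal (entropy (outdist PX Q)) - cross_info PX Q P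
     + (INF R \<in> {R. is_channel R \<and> outdist PX R = outdist PX Q}. relent (joint PX R) (joint PX P))"

definition aleph :: "real \<Rightarrow> ('x::finite \<Rightarrow> real) \<Rightarrow> ('x \<Rightarrow> 'y::finite \<Rightarrow> real) \<Rightarrow> ereal" where
  "aleph R PX P = (INF Q \<in> {Q. is_channel Q}.
      relent (joint PX Q) (joint PX P)
      + ereal (1/2) * posp (ereal R - relent (joint PX Q) (proddist PX (outdist PX Q))))"

definition beth :: "real \<Rightarrow> ('x::finite \<Rightarrow> real) \<Rightarrow> ('x \<Rightarrow> 'y::finite \<Rightarrow> real) \<Rightarrow> ereal" where
  "beth R PX P = (INF Q \<in> {Q. is_channel Q}.
      relent (joint PX Q) (joint PX P) + posp (ereal R - Gfun Q P PX))"

end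

theory Submission imports Defs begin

text \<open>The inequality holds channel by channel. For a channel Q with
  D = D(P_X Q || P_X P_{Y|X}) finite, I = D(P_X Q || P_X Q_Y) and c = E[i_P(Y|X)], the chain rule gives
  D = I - H(Q_Y) + c. Dropping the (nonnegative) minimum over R in G yields G \<ge> H(Q_Y) - c = I - D,
  hence [R - G]_+ \<le> [R - I + D]_+ \<le> [R - I]_+ + D, and so (D + [R - G]_+)/2 \<le> D + [R - I]_+/2.\<close>

lemma sum_UNIV_prod:
  "sum f (UNIV :: ('a::finite \<times> 'b::finite) set) = (\<Sum>x\<in>UNIV. \<Sum>y\<in>UNIV. f (x, y))"
  by (simp add: sum.cartesian_product UNIV_Times_UNIV[symmetric] del: UNIV_Times_UNIV)

lemma sum_positive_support:
  "sum f {a::'a::finite. g a > (0::real)} = (\<Sum>a\<in>UNIV. if g a > 0 then f a else 0)"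
  by (simp add: sum.inter_filter[symmetric])

lemma sum_positive_support_eq_sum:
  fixes P :: "'a::finite \<Rightarrow> real"
  assumes "\<And>a. P a \<ge> 0" and "\<And>a. P a = 0 \<Longrightarrow> f a = 0"
  shows "(\<Sum>a | P a > 0. f a) = sum f UNIV"
  unfolding sum_positive_support using assms by (intro sum.cong) (auto simp: order.order_iff_strict)

lemma relent_nonneg:
  fixes P Q :: "'a::finite \<Rightarrow> real"
  assumes "is_dist P" "\<And>a. Q a \<ge> 0" "sum Q UNIV \<le> 1"
  shows "relent P Q \<ge> 0"
proof (cases "\<forall>a. P a > 0 \<longrightarrow> Q a > 0")
  case False
  thus ?thesis unfolding relent_def by auto
next
  case True
  have term_ge: "P a * ln (P a / Q a) \<ge> P a - Q a" if "P a > 0" for a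
  proof -
    have "Q a > 0" using True that by blast
    hence "ln (Q a / P a) \<le> Q a / P a - 1" and "ln (P a / Q a) = - ln (Q a / P a)"
      using that by (simp add: ln_le_minus_one del: ln_div, simp add: ln_div)
    hence "P a * ln (P a / Q a) \<ge> P a * (1 - Q a / P a)"
      using that by (intro mult_left_mono) auto
    thus ?thesis using that by (simp add: algebra_simps)
  qed
  have "0 \<le> 1 - sum Q UNIV" using assms(3) by simp
  also have "\<dots> \<le> sum P UNIV - (\<Sum>a | P a > 0. Q a)"
    using assms(1,2) by (simp add: is_dist_def sum_mono2)
  also have "\<dots> = (\<Sum>a | P a > 0. P a - Q a)"
    using assms(1) unfolding sum_subtractf is_dist_def
    by (subst sum_positive_support_eq_sum[of P P]) auto
  also have "\<dots> \<le> (\<Sum>a | P a > 0. P a * ln (P a / Q a))"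
    by (rule sum_mono) (use term_ge in auto)
  finally have "(\<Sum>a | P a > 0. P a * ln (P a / Q a)) \<ge> 0" .
  thus ?thesis using True by (simp add: relent_def)
qed

lemma joint_nonneg: "is_dist PX \<Longrightarrow> is_channel W \<Longrightarrow> joint PX W a \<ge> 0"
  by (cases a) (simp add: joint_def is_dist_def is_channel_def)

lemma joint_is_dist: "is_dist PX \<Longrightarrow> is_channel W \<Longrightarrow> is_dist (joint PX W)"
  unfolding is_dist_def
  by (simp add: joint_nonneg[unfolded is_dist_def] sum_UNIV_prod joint_def
      is_channel_def is_dist_def sum_distrib_left[symmetric])

lemma relent_joint_nonneg:
  "is_dist PX \<Longrightarrow> is_channel W \<Longrightarrow> is_channel V \<Longrightarrow> relent (joint PX W) (joint PX V) \<ge> 0"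
  using joint_is_dist[of PX V] by (intro relent_nonneg joint_is_dist) (auto simp: is_dist_def)

lemma outdist_nonneg: "is_dist PX \<Longrightarrow> is_channel W \<Longrightarrow> outdist PX W y \<ge> 0"
  by (auto simp: outdist_def is_dist_def is_channel_def intro!: sum_nonneg)

lemma joint_le_outdist: "is_dist PX \<Longrightarrow> is_channel W \<Longrightarrow> PX x * W x y \<le> outdist PX W y"
  unfolding outdist_def
  by (rule member_le_sum[where f = "\<lambda>x. PX x * W x y"]) (auto simp: is_dist_def is_channel_def)

lemma joint_support:
  assumes "is_dist PX" "is_channel W" "PX x * W x y > 0"
  shows "PX x > 0" "W x y > 0" "outdist PX W y > 0"
proof -
  show "PX x > 0" "W x y > 0"
    using assms by (auto simp: zero_less_mult_iff is_dist_def is_channel_def dest: spec[of _ x])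
  show "outdist PX W y > 0"
    using assms(3) joint_le_outdist[OF assms(1,2)] by (rule order_less_le_trans)
qed

lemma entropy_outdist:
  assumes "is_dist PX" "is_channel W"
  shows "entropy (outdist PX W) = - (\<Sum>a\<in>UNIV. joint PX W a * ln (outdist PX W (snd a)))"
proof -
  let ?QY = "outdist PX W"
  have "(\<Sum>a\<in>UNIV. joint PX W a * ln (?QY (snd a))) = (\<Sum>y\<in>UNIV. ?QY y * ln (?QY y))"
    by (simp add: sum_UNIV_prod joint_def outdist_def sum_distrib_right[symmetric]
        sum.swap[where A = UNIV and B = UNIV])
  also have "\<dots> = (\<Sum>y | ?QY y > 0. ?QY y * ln (?QY y))"
    using outdist_nonneg[OF assms] by (intro sum_positive_support_eq_sum[symmetric]) auto
  finally show ?thesis by (simp add: entropy_def)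
qed

lemma relent_joint_chain_rule:
  fixes PX :: "'x::finite \<Rightarrow> real" and P Q :: "'x \<Rightarrow> 'y::finite \<Rightarrow> real"
  assumes dPX: "is_dist PX" and chP: "is_channel P" and chQ: "is_channel Q"
    and abs_cont: "\<forall>a. joint PX Q a > 0 \<longrightarrow> joint PX P a > 0"
  obtains i c where "relent (joint PX Q) (proddist PX (outdist PX Q)) = ereal i"
    and "cross_info PX Q P = ereal c"
    and "relent (joint PX Q) (joint PX P) = ereal (i - entropy (outdist PX Q) + c)"
proof -
  define J where "J = joint PX Q"
  define QY where "QY = outdist PX Q"
  have supp: "PX x > 0 \<and> Q x y > 0 \<and> QY y > 0 \<and> P x y > 0" if "J (x, y) > 0" for x y
  proof -
    have "PX x * Q x y > 0" "PX x * P x y > 0"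
      using that abs_cont by (auto simp: J_def joint_def)
    with joint_support[OF dPX chQ] dPX show ?thesis
      by (auto simp: QY_def zero_less_mult_iff is_dist_def dest: spec[of _ x])
  qed
  define i where "i = (\<Sum>a | J a > 0. J a * ln (J a / proddist PX QY a))"
  define d where "d = (\<Sum>a | J a > 0. J a * ln (J a / joint PX P a))"
  define c where "c = (\<Sum>a | J a > 0. J a * ln (1 / P (fst a) (snd a)))"
  have "cross_info PX Q P = ereal c"
  proof -
    have J_pos: "J (x, y) > 0 \<longleftrightarrow> PX x * Q x y > 0" for x y by (simp add: J_def joint_def)
    have "(\<Sum>(x, y) | PX x * Q x y > 0. PX x * Q x y * ln (1 / P x y)) = c"
      unfolding c_def by (rule sum.cong) (auto simp: J_pos J_def joint_def)
    moreover have "\<forall>x y. PX x * Q x y > 0 \<longrightarrow> P x y > 0" using supp J_pos by blast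
    ultimately show ?thesis by (simp add: cross_info_def)
  qed
  moreover have "relent J (proddist PX QY) = ereal i"
  proof -
    have "proddist PX QY a > 0" if "J a > 0" for a
      using that supp by (cases a) (simp add: proddist_def)
    thus ?thesis by (simp add: relent_def i_def)
  qed
  moreover have "relent J (joint PX P) = ereal d"
    using abs_cont by (simp add: relent_def d_def J_def)
  moreover have "d = i - entropy QY + c"
  proof -
    have term_eq: "J a * ln (J a / proddist PX QY a) + J a * ln (1 / P (fst a) (snd a))
        = J a * ln (J a / joint PX P a) - J a * ln (QY (snd a))" if "J a > 0" for a
    proof (cases a)
      case (Pair x y)
      with that supp[of x y] show ?thesis
        by (simp add: J_def joint_def proddist_def ln_div ln_mult algebra_simps)
    qed
    have "i + c = (\<Sum>a | J a > 0. J a * ln (J a / joint PX P a) - J a * ln (QY (snd a)))"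
      unfolding i_def c_def sum.distrib[symmetric] by (rule sum.cong) (simp_all add: term_eq)
    also have "\<dots> = d - (\<Sum>a | J a > 0. J a * ln (QY (snd a)))"
      by (simp add: sum_subtractf d_def)
    also have "(\<Sum>a | J a > 0. J a * ln (QY (snd a))) = (\<Sum>a\<in>UNIV. J a * ln (QY (snd a)))"
      using joint_nonneg[OF dPX chQ] by (intro sum_positive_support_eq_sum) (auto simp: J_def)
    also have "d - \<dots> = d + entropy QY"
      using entropy_outdist[OF dPX chQ] by (simp add: J_def QY_def)
    finally show ?thesis by simp
  qed
  ultimately show thesis using that by (simp add: J_def QY_def)
qed

lemma Gfun_ge_entropy_minus_cross_info:
  fixes PX :: "'x::finite \<Rightarrow> real" and P Q :: "'x \<Rightarrow> 'y::finite \<Rightarrow> real"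
  assumes dPX: "is_dist PX" and chP: "is_channel P"
    and "cross_info PX Q P = ereal c"
  shows "Gfun Q P PX \<ge> ereal (entropy (outdist PX Q) - c)"
proof -
  have "(INF R \<in> {R. is_channel R \<and> outdist PX R = outdist PX Q}. relent (joint PX R) (joint PX P)) \<ge> 0"
    by (rule INF_greatest) (use relent_joint_nonneg[OF dPX _ chP] in auto)
  thus ?thesis
    unfolding Gfun_def assms(3) by (intro add_increasing2) auto
qed

lemma posp_ereal: "posp (ereal r) = ereal (max 0 r)"
  by (cases "r \<ge> 0") (auto simp: posp_def max_def)

lemma half_add_posp_le:
  assumes "d \<ge> 0" and "ereal R - G \<le> ereal (R - i + d)"
  shows "ereal (1/2) * (ereal d + posp (ereal R - G)) \<le> ereal d + ereal (1/2) * posp (ereal R - ereal i)"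
proof -
  have "posp (ereal R - G) \<le> posp (ereal (R - i + d))"
    unfolding posp_def by (rule max.mono[OF order.refl assms(2)])
  hence "posp (ereal R - G) \<le> ereal (max 0 (R - i + d))"
    unfolding posp_ereal .
  hence "ereal d + posp (ereal R - G) \<le> ereal d + ereal (max 0 (R - i + d))"
    by (rule add_left_mono)
  hence "ereal (1/2) * (ereal d + posp (ereal R - G)) \<le> ereal (1/2) * (ereal d + ereal (max 0 (R - i + d)))"
    by (rule ereal_mult_left_mono) simp
  also have "\<dots> = ereal ((d + max 0 (R - i + d)) / 2)"
    by (simp only: plus_ereal.simps times_ereal.simps) simp
  also have "\<dots> \<le> ereal (d + max 0 (R - i) / 2)" using assms(1) by (simp add: max_def)
  also have "\<dots> = ereal d + ereal (1/2) * posp (ereal R - ereal i)"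
    unfolding ereal_minus(1) posp_ereal by (simp only: plus_ereal.simps times_ereal.simps) simp
  finally show ?thesis .
qed

lemma half_beth_term_le_aleph_term:
  fixes PX :: "'x::finite \<Rightarrow> real" and P Q :: "'x \<Rightarrow> 'y::finite \<Rightarrow> real"
  assumes dPX: "is_dist PX" and chP: "is_channel P" and chQ: "is_channel Q"
  shows "ereal (1/2) * (relent (joint PX Q) (joint PX P) + posp (ereal R - Gfun Q P PX))
    \<le> relent (joint PX Q) (joint PX P)
       + ereal (1/2) * posp (ereal R - relent (joint PX Q) (proddist PX (outdist PX Q)))"
proof (cases "\<forall>a. joint PX Q a > 0 \<longrightarrow> joint PX P a > 0")
  case False
  hence "relent (joint PX Q) (joint PX P) = \<infinity>" unfolding relent_def by auto
  moreover have "ereal (1/2) * posp z \<noteq> -\<infinity>" for z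
    by (simp add: posp_def ereal_mult_eq_MInfty)
  ultimately show ?thesis by simp
next
  case True
  then obtain i c where i: "relent (joint PX Q) (proddist PX (outdist PX Q)) = ereal i"
    and c: "cross_info PX Q P = ereal c"
    and d: "relent (joint PX Q) (joint PX P) = ereal (i - entropy (outdist PX Q) + c)"
    by (rule relent_joint_chain_rule[OF dPX chP chQ])
  have "ereal R - Gfun Q P PX \<le> ereal R - ereal (entropy (outdist PX Q) - c)"
    by (intro ereal_minus_mono order.refl Gfun_ge_entropy_minus_cross_info[OF dPX chP c])
  also have "\<dots> = ereal (R - i + (i - entropy (outdist PX Q) + c))" by simp
  finally have "ereal R - Gfun Q P PX \<le> \<dots>" .
  moreover have "i - entropy (outdist PX Q) + c \<ge> 0"
    using relent_joint_nonneg[OF dPX chQ chP] d by simp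
  ultimately show ?thesis
    unfolding i d by (intro half_add_posp_le) auto
qed

theorem proposition4:
  fixes PX :: "'x::finite \<Rightarrow> real" and P :: "'x \<Rightarrow> 'y::finite \<Rightarrow> real"
    and m :: nat and R :: real
  assumes "is_mtype m PX"
    and "is_channel P"
    and "ereal R > mutinf PX P"
    and "mutinf PX P > 0"
  shows "aleph R PX P \<ge> ereal (1/2) * beth R PX P"
  unfolding aleph_def
proof (rule INF_greatest)
  fix Q :: "'x \<Rightarrow> 'y \<Rightarrow> real"
  assume "Q \<in> {Q. is_channel Q}"
  hence chQ: "is_channel Q" by simp
  have dPX: "is_dist PX" using assms(1) by (simp add: is_mtype_def)
  have "ereal (1/2) * beth R PX P
      \<le> ereal (1/2) * (relent (joint PX Q) (joint PX P) + posp (ereal R - Gfun Q P PX))"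
    unfolding beth_def by (intro ereal_mult_left_mono INF_lower) (use chQ in auto)
  also have "\<dots> \<le> relent (joint PX Q) (joint PX P)
      + ereal (1/2) * posp (ereal R - relent (joint PX Q) (proddist PX (outdist PX Q)))"
    by (rule half_beth_term_le_aleph_term[OF dPX assms(2) chQ])
  finally show "ereal (1/2) * beth R PX P \<le> \<dots>" .
qed

end
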